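(* Let $n\in\mathbb N^+\cup\{\infty\}$ and let $\xi\in(0,\infty)\setminus\{\sqrt{2k}:k\in\mathbb N^+\}$. For a complex sequence $a=(a_k)_{k=0}^n$ (with $\|a\|_{\mathcal V_n}<\infty$ if $n=\infty$), interpreted as $a_k=\hat v_k(\xi)$, define the data $\tilde S_s=\tilde S_s(\xi)$, $0\le s\le n$, by $$\tilde S_0=\tfrac{\sqrt2}{2}\,\xi\,\hat S^{\mathrm{lin}}_{(1,+1),(1,-1)}(E_0(\xi)),$$ $$\tilde S_s=\sqrt{1+\tfrac{\xi^2}{2s}}\;\hat S^{\mathrm{lin}}_{(s,+1),(0,-1)}(E_s(\xi))\ \text{ if } 0<s<\tfrac{\xi^2}{2},\qquad \tilde S_s=\sqrt{1+\tfrac{\xi^2}{2s}}\;\hat S^{\mathrm{lin}}_{(s,-1),(0,-1)}(E_s(\xi))\ \text{ if } s>\tfrac{\xi^2}{2},$$ where $E_0(\xi)=\sqrt{\xi^2/4+2}$, $E_s(\xi)=\sqrt{\xi^2/4+s+s^2/\xi^2}$ for $s\in\mathbb N^+$, and the linearized scattering coefficients $\hat S^{\mathrm{lin}}$ of the scalar potential are computed with $\hat v_k(\xi_{m}(E)-\xi_p(E))$ replaced by $a_k$ (at these energies $\xi_m(E)-\xi_p(E)=\xi$). Then the linear map $\mathcal L^{\mathrm{lin}}(\xi):(a_k)_{k=0}^n\mapsto(\tilde S_s)_{s=0}^n$ is injective (hence a linear bijection of $\mathbb C^{n+1}$ when $n$ is finite), and there exist constants $C_1,C_2>0$ independent of $\xi$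 and $n$ such that $$C_1\|a\|_{\mathcal V_n}\le\|\tilde S\|_{\mathcal S_n}\le C_2\|a\|_{\mathcal V_n}.$$
   Context: Hermite functions: $\varphi_n(y)=(2^n n!\sqrt\pi)^{-1/2}H_n(y)e^{-y^2/2}$ ($H_n$ the physicists' Hermite polynomials), an orthonormal basis of $L^2(\mathbb R)$; rescaled Hermite functions $\tilde\varphi_k(y)=2^{1/2}\pi^{1/4}\varphi_k(\sqrt2 y)$. Mode indices: $M=\{(n,\pm1):n\in\mathbb N^+\}\cup\{(0,-1)\}$; write $n\pm$ for $(n,\pm1)$. For $E\in\mathbb R$, $M(E)=\{(n,\epsilon)\in M: E^2>2n\}$. For $m=(n,\epsilon_m)\in M(E)$ with $n\ge1$: $\xi_m(E)=\epsilon_m\sqrt{E^2-2n}$ and $\phi_m(y;E)=c_m\big(\sqrt{2n}\,\varphi_{n-1}(y),\,(E-\xi_m(E))\varphi_n(y)\big)^T$ with $c_m=(2n+|E-\xi_m(E)|^2)^{-1/2}$; for $m=(0,-1)$: $\xi_m(E)=-E$, $\phi_m=(0,\varphi_0)^T$. Linearized scattering coefficients: for a bounded, compactly supported, Hermitian-matrix-valued $V(x,y)$, $E\in\mathbb R$ and $m=(n,\epsilon_m),p=(q,\epsilon_p)\in M(E)$, $$\hat S^{\mathrm{lin}}_{m,p}(E;V)=\frac{iE}{\sqrt{E^2-2q}}\iint e^{-i(\xi_m(E)-\xi_p(E))x}\,\overline{\phi_m(y;E)}^T V(x,y)\phi_p(y;E)\,dy\,dx.$$ Scalar potentials: $V(x,y)=\sum_{k=0}^n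 v_k(x)\tilde\varphi_k(y)I_2$ with $v_k$ real-valued, integrable and compactly supported, $\hat v_k(\xi)=\int v_k(x)e^{-i\xi x}dx$; then $\hat S^{\mathrm{lin}}_{m,p}(E)=\frac{iE}{\sqrt{E^2-2q}}\sum_k\hat v_k(\xi_m(E)-\xi_p(E))\int\overline{\phi_m(y;E)}^T\phi_p(y;E)\tilde\varphi_k(y)\,dy$. Norms: for $a=(a_s)_{s=0}^n$, $\|a\|_{\mathcal V_n}=\sum_{s=0}^n|a_s|/\sqrt{s!}$ and $\|a\|_{\mathcal S_n}=\sum_{s=0}^n 2^{s/2}|a_s|/\sqrt{s!}$. *)

theory Defs
  imports "HOL-Analysis.Analysis" "HOL-Library.Extended_Nat"
begin

fun hermiteH :: "nat \<Rightarrow> real \<Rightarrow> real" where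
  "hermiteH 0 y = 1"
| "hermiteH (Suc 0) y = 2 * y"
| "hermiteH (Suc (Suc n)) y = 2 * y * hermiteH (Suc n) y - 2 * real (Suc n) * hermiteH n y"

definition hermite_fun :: "nat \<Rightarrow> real \<Rightarrow> real" where
  "hermite_fun n y = (2 ^ n * fact n * sqrt pi) powr (-1/2) * hermiteH n y * exp (- y\<^sup>2 / 2)"

definition hermite_resc :: "nat \<Rightarrow> real \<Rightarrow> real" where
  "hermite_resc k y = sqrt 2 * pi powr (1/4) * hermite_fun k (sqrt 2 * y)"

text \<open>Modes are pairs (n, eps) with eps in {1,-1}; (0,-1) is the special mode.\<close>
type_synonym mode = "nat \<times> int"

definition mode_xi :: "mode \<Rightarrow> real \<Rightarrow> real" where
  "mode_xi m E = (if fst m = 0 then - E else of_int (snd m) * sqrt (E\<^sup>2 - 2 * real (fst m)))"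

definition mode_fun :: "mode \<Rightarrow> real \<Rightarrow> real \<Rightarrow> real \<times> real" where
  "mode_fun m E y =
     (if fst m = 0 then (0, hermite_fun 0 y)
      else (let n = fst m; c = (2 * real n + \<bar>E - mode_xi m E\<bar>\<^sup>2) powr (-1/2)
            in (c * sqrt (2 * real n) * hermite_fun (n - 1) y,
                c * (E - mode_xi m E) * hermite_fun n y)))"

text \<open>conj(phi_m)^T phi_p (phi real-valued).\<close>
definition mode_inner :: "mode \<Rightarrow> mode \<Rightarrow> real \<Rightarrow> real \<Rightarrow> real" where
  "mode_inner m p E y = fst (mode_fun m E y) * fst (mode_fun p E y) + snd (mode_fun m E y) * snd (mode_fun p E y)"

text \<open>Linearized scattering coefficient of the scalar potential sum_{k<=n} v_k(x) tilde phi_k(y) I_2,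
  with hat v_k(xi_m(E) - xi_p(E)) replaced by a k.\<close>
definition Slin :: "enat \<Rightarrow> (nat \<Rightarrow> complex) \<Rightarrow> mode \<Rightarrow> mode \<Rightarrow> real \<Rightarrow> complex" where
  "Slin n a m p E =
     \<i> * complex_of_real (E / sqrt (E\<^sup>2 - 2 * real (fst p))) *
     (\<Sum>k. if enat k \<le> n
           then a k * complex_of_real (LBINT y. mode_inner m p E y * hermite_resc k y)
           else 0)"

definition E0 :: "real \<Rightarrow> real" where
  "E0 \<xi> = sqrt (\<xi>\<^sup>2 / 4 + 2)"

definition Es :: "real \<Rightarrow> nat \<Rightarrow> real" where
  "Es \<xi> s = sqrt (\<xi>\<^sup>2 / 4 + real s + (real s)\<^sup>2 / \<xi>\<^sup>2)"

definition Stilde :: "real \<Rightarrow> enat \<Rightarrow> (nat \<Rightarrow> complex) \<Rightarrow> nat \<Rightarrow> complex" where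
  "Stilde \<xi> n a s =
     (if s = 0 then complex_of_real (sqrt 2 / 2 * \<xi>) * Slin n a (1, 1) (1, -1) (E0 \<xi>)
      else if real s < \<xi>\<^sup>2 / 2
      then complex_of_real (sqrt (1 + \<xi>\<^sup>2 / (2 * real s))) * Slin n a (s, 1) (0, -1) (Es \<xi> s)
      else complex_of_real (sqrt (1 + \<xi>\<^sup>2 / (2 * real s))) * Slin n a (s, -1) (0, -1) (Es \<xi> s))"

text \<open>The norms (as extended nonnegative reals, so that n = infinity is covered).\<close>
definition normV :: "enat \<Rightarrow> (nat \<Rightarrow> complex) \<Rightarrow> ennreal" where
  "normV n a = (\<Sum>s. if enat s \<le> n then ennreal (cmod (a s) / sqrt (fact s)) else 0)"

definition normS :: "enat \<Rightarrow> (nat \<Rightarrow> complex) \<Rightarrow> ennreal" where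
  "normS n b = (\<Sum>s. if enat s \<le> n then ennreal (2 powr (real s / 2) * cmod (b s) / sqrt (fact s)) else 0)"

end

(*
  At the energies E_0(xi) and E_s(xi) all phases xi_m(E) - xi_p(E) equal xi, and the y-integrals
  in S^lin become expectations of polynomials under the centred Gaussian of variance 1/4: the
  mode functions carry a factor exp(-y^2/2) each and the rescaled Hermite functions exp(-y^2).
  For this Gaussian, Stein's identity E[Y p(Y)] = E[p'(Y)] / 4 turns multiplication by
  H_k(sqrt 2 y) into k-fold differentiation, so that with b_k = a_k / sqrt(k!)

    2^(s/2) S~_s / sqrt(s!) = i (c * b)_s   for s >= 1,        S~_0 = i (3/2 b_0 + b_2),

  where c_j are the Taylor coefficients of exp(-x^2/2). Convolution with c is triangular with
  unit diagonal, hence solvable on every finite section, and since sum_j |c_j| = e^(1/2) < 2,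
  the l^1 norms of b and of c * b are comparable (write b = c * b - (c - delta_0) * b).
  The datum (c * b)_0 = b_0, which is not measured, is recovered from S~_0 and S~_2.
*)

theory Submission
  imports Defs "HOL-Probability.Distributions" "HOL-Computational_Algebra.Polynomial"
begin

section \<open>Hermite polynomials\<close>

fun hermite_poly :: "real \<Rightarrow> nat \<Rightarrow> real poly" where
  "hermite_poly c 0 = 1"
| "hermite_poly c (Suc 0) = [:0, 2 * c:]"
| "hermite_poly c (Suc (Suc k)) =
     [:0, 2 * c:] * hermite_poly c (Suc k) - smult (2 * real (Suc k)) (hermite_poly c k)"

lemma poly_hermite_poly: "poly (hermite_poly c k) y = hermiteH k (c * y)"
  by (induction c k rule: hermite_poly.induct) (auto simp: algebra_simps)

lemma hermite_poly_Suc: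
  "hermite_poly c (Suc k) = [:0, 2 * c:] * hermite_poly c k - smult (2 * real k) (hermite_poly c (k - 1))"
  by (cases k) simp_all

lemma pderiv_hermite_poly: "pderiv (hermite_poly c k) = smult (2 * c * real k) (hermite_poly c (k - 1))"
proof (induction c k rule: hermite_poly.induct)
  case (3 c k)
  have "pderiv (hermite_poly c (Suc (Suc k))) =
      smult (2 * c) (hermite_poly c (Suc k)) + [:0, 2 * c:] * smult (2 * c * real (Suc k)) (hermite_poly c k)
      - smult (2 * real (Suc k)) (smult (2 * c * real k) (hermite_poly c (k - 1)))"
    using "3.IH" by (simp only: hermite_poly.simps pderiv_diff pderiv_mult pderiv_smult) (simp add: pderiv_pCons)
  also have "\<dots> = smult (2 * c) (hermite_poly c (Suc k)) + smult (2 * c * real (Suc k))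
      ([:0, 2 * c:] * hermite_poly c k - smult (2 * real k) (hermite_poly c (k - 1)))"
    by (simp add: smult_diff_right mult_ac)
  also have "\<dots> = smult (2 * c) (hermite_poly c (Suc k)) + smult (2 * c * real (Suc k)) (hermite_poly c (Suc k))"
    by (simp only: hermite_poly_Suc[of c k])
  also have "\<dots> = smult (2 * c * real (Suc (Suc k))) (hermite_poly c (Suc (Suc k) - 1))"
    by (simp add: algebra_simps flip: smult_add_left)
  finally show ?case .
qed (simp_all add: pderiv_pCons)

lemma higher_pderiv_hermite_poly:
  "(pderiv ^^ k) (hermite_poly c s) =
     (if k \<le> s then smult ((2 * c) ^ k * fact s / fact (s - k)) (hermite_poly c (s - k)) else 0)"
proof (induction k)
  case (Suc k)
  show ?case
  proof (cases "Suc k \<le> s")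
    case True
    then obtain r where r: "s - k = Suc r" "s - Suc k = r"
      by (metis Suc_diff_Suc Suc_le_lessD diff_Suc_Suc)
    have "(2 * c) ^ k * fact s / fact (Suc r) * (2 * c * real (Suc r)) = (2 * c) ^ Suc k * fact s / (fact r :: real)"
      by (simp add: divide_simps del: fact_Suc) (simp add: algebra_simps)
    then show ?thesis
      using Suc True r by (simp add: pderiv_smult pderiv_hermite_poly del: fact_Suc)
  next
    case False
    then show ?thesis
      using Suc by (cases "k = s") (simp_all add: pderiv_smult)
  qed
qed simp

section \<open>Gaussian expectations of polynomials\<close>

definition gauss_expect :: "real \<Rightarrow> real poly \<Rightarrow> real" where
  "gauss_expect \<sigma> p = (LBINT y. normal_density 0 \<sigma> y * poly p y)"

lemma integrable_normal_density_poly: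
  assumes "0 < \<sigma>"
  shows "integrable lborel (\<lambda>y. normal_density 0 \<sigma> y * poly p y)"
proof -
  have "integrable lborel (\<lambda>y. normal_density 0 \<sigma> y * y ^ i)" for i
    using integrable_normal_moment[OF assms, of 0 i] by simp
  then have "integrable lborel (\<lambda>y. \<Sum>i\<le>degree p. coeff p i * (normal_density 0 \<sigma> y * y ^ i))"
    by (intro Bochner_Integration.integrable_sum integrable_mult_right)
  then show ?thesis
    by (simp add: poly_altdef sum_distrib_left algebra_simps)
qed

lemma gauss_expect_add: "0 < \<sigma> \<Longrightarrow> gauss_expect \<sigma> (p + q) = gauss_expect \<sigma> p + gauss_expect \<sigma> q"
  unfolding gauss_expect_def by (simp add: distrib_left integrable_normal_density_poly)

lemma gauss_expect_diff: "0 < \<sigma> \<Longrightarrow> gauss_expect \<sigma> (p - q) = gauss_expect \<sigma> p - gauss_expect \<sigma> q"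
  unfolding gauss_expect_def by (simp add: right_diff_distrib integrable_normal_density_poly)

lemma gauss_expect_smult: "gauss_expect \<sigma> (smult c p) = c * gauss_expect \<sigma> p"
  unfolding gauss_expect_def by (simp add: algebra_simps)

lemma gauss_expect_sum:
  "0 < \<sigma> \<Longrightarrow> gauss_expect \<sigma> (\<Sum>i\<in>I. f i) = (\<Sum>i\<in>I. gauss_expect \<sigma> (f i))"
  unfolding gauss_expect_def by (simp add: poly_sum sum_distrib_left integrable_normal_density_poly)

lemma gauss_expect_zero: "gauss_expect \<sigma> 0 = 0"
  unfolding gauss_expect_def by simp

lemma gauss_expect_one: "0 < \<sigma> \<Longrightarrow> gauss_expect \<sigma> 1 = 1"
  unfolding gauss_expect_def by simp

lemma gauss_expect_monom: "gauss_expect \<sigma> (monom c j) = c * (LBINT y. normal_density 0 \<sigma> y * y ^ j)"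
  unfolding gauss_expect_def by (simp add: poly_monom algebra_simps)

lemma normal_moment_Suc_Suc:
  assumes "0 < \<sigma>"
  shows "(LBINT y. normal_density 0 \<sigma> y * y ^ Suc (Suc k)) =
           \<sigma>\<^sup>2 * real (Suc k) * (LBINT y. normal_density 0 \<sigma> y * y ^ k)"
proof (cases "even k")
  case True
  then obtain j where k: "k = 2 * j" by blast
  have "fact (2 * Suc j) = real (2 * j + 2) * real (2 * j + 1) * (fact (2 * j) :: real)"
    by (simp add: algebra_simps)
  then have "fact (2 * Suc j) / ((2 / \<sigma>\<^sup>2) ^ Suc j * fact (Suc j)) =
          \<sigma>\<^sup>2 * real (Suc (2 * j)) * (fact (2 * j) / ((2 / \<sigma>\<^sup>2) ^ j * fact j))"
    using assms by (simp add: field_simps del: fact_Suc) (simp add: algebra_simps)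
  moreover have "Suc (Suc k) = 2 * Suc j" using k by simp
  ultimately show ?thesis
    using integral_normal_moment_even[OF assms, of 0] k by (simp del: fact_Suc mult_Suc_right)
next
  case False
  then obtain j where "k = 2 * j + 1" using oddE by blast
  then show ?thesis
    using integral_normal_moment_odd[OF assms, of 0 j] integral_normal_moment_odd[OF assms, of 0 "Suc j"]
    by simp
qed

lemma gauss_expect_pCons_0:
  assumes "0 < \<sigma>"
  shows "gauss_expect \<sigma> (pCons 0 p) = \<sigma>\<^sup>2 * gauss_expect \<sigma> (pderiv p)"
proof -
  have monom: "gauss_expect \<sigma> (pCons 0 (monom c i)) = \<sigma>\<^sup>2 * gauss_expect \<sigma> (pderiv (monom c i))" for c i
  proof (cases i)
    case 0
    have "gauss_expect \<sigma> (monom c (Suc 0)) = 0"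
      using integral_normal_moment_odd[OF assms, of 0 0] by (simp add: gauss_expect_monom)
    then show ?thesis
      using 0 by (simp add: pderiv_monom gauss_expect_zero flip: monom_Suc)
  next
    case (Suc j)
    have "gauss_expect \<sigma> (pCons 0 (monom c i)) = c * (LBINT y. normal_density 0 \<sigma> y * y ^ Suc (Suc j))"
      using Suc by (simp only: gauss_expect_monom flip: monom_Suc)
    also have "\<dots> = c * (\<sigma>\<^sup>2 * real (Suc j) * (LBINT y. normal_density 0 \<sigma> y * y ^ j))"
      by (simp only: normal_moment_Suc_Suc[OF assms])
    also have "\<dots> = \<sigma>\<^sup>2 * gauss_expect \<sigma> (pderiv (monom c i))"
      using Suc by (simp add: pderiv_monom gauss_expect_monom mult_ac)
    finally show ?thesis .
  qed
  have "gauss_expect \<sigma> (pCons 0 p) = gauss_expect \<sigma> (\<Sum>i\<le>degree p. [:0, 1:] * monom (coeff p i) i)"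
    by (simp only: sum_distrib_left[symmetric] poly_as_sum_of_monoms) simp
  also have "\<dots> = (\<Sum>i\<le>degree p. \<sigma>\<^sup>2 * gauss_expect \<sigma> (pderiv (monom (coeff p i) i)))"
    by (simp add: gauss_expect_sum[OF assms] monom)
  also have "\<dots> = \<sigma>\<^sup>2 * gauss_expect \<sigma> (pderiv (\<Sum>i\<le>degree p. monom (coeff p i) i))"
    by (simp add: higher_pderiv_sum[where n = 1, simplified] gauss_expect_sum[OF assms] sum_distrib_left)
  finally show ?thesis
    by (simp only: poly_as_sum_of_monoms)
qed

lemma gauss_expect_mult_hermite_Suc:
  assumes "0 < \<sigma>" and c: "2 * c\<^sup>2 * \<sigma>\<^sup>2 = 1"
  shows "gauss_expect \<sigma> (p * hermite_poly c (Suc k)) = gauss_expect \<sigma> (pderiv p * hermite_poly c k) / c"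
proof -
  let ?H = "hermite_poly c k"
  have "c \<noteq> 0"
    using c by auto
  then have "p * hermite_poly c (Suc k) = smult (2 * c) (pCons 0 (p * ?H)) - smult (1 / c) (p * pderiv ?H)"
    by (cases k) (simp_all add: pderiv_hermite_poly algebra_simps)
  then have "gauss_expect \<sigma> (p * hermite_poly c (Suc k)) =
      2 * c * (\<sigma>\<^sup>2 * gauss_expect \<sigma> (pderiv (p * ?H))) - 1 / c * gauss_expect \<sigma> (p * pderiv ?H)"
    by (simp only: gauss_expect_diff[OF assms(1)] gauss_expect_smult gauss_expect_pCons_0[OF assms(1)])
  also have "2 * c * \<sigma>\<^sup>2 = 1 / c"
    using c \<open>c \<noteq> 0\<close> by (simp add: field_simps power2_eq_square)
  then have "2 * c * (\<sigma>\<^sup>2 * gauss_expect \<sigma> (pderiv (p * ?H))) = gauss_expect \<sigma> (pderiv (p * ?H)) / c"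
    by (metis mult.assoc mult_1 times_divide_eq_left)
  finally show ?thesis
    using assms(1) by (simp add: pderiv_mult gauss_expect_add add_divide_distrib mult.commute)
qed

lemma gauss_expect_mult_hermite:
  assumes "0 < \<sigma>" "2 * c\<^sup>2 * \<sigma>\<^sup>2 = 1"
  shows "gauss_expect \<sigma> (p * hermite_poly c k) = gauss_expect \<sigma> ((pderiv ^^ k) p) / c ^ k"
  by (induction k arbitrary: p)
     (simp_all add: gauss_expect_mult_hermite_Suc[OF assms] funpow_Suc_right del: funpow.simps)

text \<open>Taylor coefficients of \<open>exp (-x\<^sup>2/2)\<close>.\<close>
definition gauss_coeff :: "nat \<Rightarrow> real" where
  "gauss_coeff j = (if even j then (-1/2) ^ (j div 2) / fact (j div 2) else 0)"

lemma gauss_coeff_Suc_Suc: "gauss_coeff (Suc (Suc j)) = - gauss_coeff j / real (Suc (Suc j))"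
proof (cases "even j")
  case True
  then obtain r where "j = 2 * r" by blast
  then show ?thesis
    by (simp add: gauss_coeff_def field_simps)
qed (simp add: gauss_coeff_def)

lemma gauss_expect_hermite: "gauss_expect (1/2) (hermite_poly 1 j) = fact j * gauss_coeff j"
proof (induction j rule: nat_induct2)
  case 0
  then show ?case by (simp add: gauss_expect_one gauss_coeff_def)
next
  case 1
  have "hermite_poly 1 1 = smult 2 (pCons 0 1)"
    by simp
  then have "gauss_expect (1/2) (hermite_poly 1 1) = 2 * gauss_expect (1/2) (pCons 0 1)"
    by (simp only: gauss_expect_smult)
  also have "\<dots> = 0"
    by (simp add: gauss_expect_pCons_0 gauss_expect_zero)
  finally show ?case
    by (simp add: gauss_coeff_def)
next
  case (step j)
  have "hermite_poly 1 (j + 2) =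
      smult 2 (pCons 0 (hermite_poly 1 (Suc j))) - smult (2 * real (Suc j)) (hermite_poly 1 j)"
    by simp
  then have "gauss_expect (1/2) (hermite_poly 1 (j + 2)) =
      2 * gauss_expect (1/2) (pCons 0 (hermite_poly 1 (Suc j))) - 2 * real (Suc j) * gauss_expect (1/2) (hermite_poly 1 j)"
    by (simp only: gauss_expect_diff[of "1/2", simplified] gauss_expect_smult)
  also have "gauss_expect (1/2) (pCons 0 (hermite_poly 1 (Suc j))) = real (Suc j) / 2 * gauss_expect (1/2) (hermite_poly 1 j)"
    by (simp add: gauss_expect_pCons_0 pderiv_hermite_poly gauss_expect_smult power2_eq_square)
  finally have "gauss_expect (1/2) (hermite_poly 1 (j + 2)) = - real (Suc j) * gauss_expect (1/2) (hermite_poly 1 j)"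
    by (simp add: algebra_simps)
  then show ?case
    using step by (simp add: gauss_coeff_Suc_Suc del: fact_Suc) (simp add: field_simps)
qed

lemma gauss_expect_hermite_mult_hermite:
  "gauss_expect (1/2) (hermite_poly 1 s * hermite_poly (sqrt 2) k) =
     (if k \<le> s then sqrt 2 ^ k * fact s * gauss_coeff (s - k) else 0)"
proof -
  have "(2::real) ^ k = sqrt 2 ^ k * sqrt 2 ^ k"
    by (simp flip: power_mult_distrib)
  then show ?thesis
    by (simp add: gauss_expect_mult_hermite[of "1/2"] higher_pderiv_hermite_poly gauss_expect_smult
                  gauss_expect_hermite gauss_expect_zero power_divide)
qed

lemma gauss_expect_quadratic_mult_hermite:
  "gauss_expect (1/2) ([:1, 0, 2:] * hermite_poly (sqrt 2) k) = (if k = 0 then 3/2 else if k = 2 then 2 else 0)"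
proof -
  have "[:1, 0, 2:] = smult (1/2) (hermite_poly 1 2) + smult 2 (hermite_poly 1 0)"
    by (simp add: numeral_2_eq_2)
  then have "gauss_expect (1/2) ([:1, 0, 2:] * hermite_poly (sqrt 2) k) =
      1/2 * gauss_expect (1/2) (hermite_poly 1 2 * hermite_poly (sqrt 2) k) +
      2 * gauss_expect (1/2) (hermite_poly 1 0 * hermite_poly (sqrt 2) k)"
    by (simp only: distrib_right mult_smult_left gauss_expect_add[of "1/2"] gauss_expect_smult half_gt_zero)
  moreover have "k = 0 \<or> k = 1 \<or> k = 2 \<or> 2 < k"
    by linarith
  ultimately show ?thesis
    by (simp only: gauss_expect_hermite_mult_hermite) (auto simp: gauss_coeff_def numeral_2_eq_2)
qed

section \<open>Convolution of sequences\<close>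

definition seq_conv :: "(nat \<Rightarrow> real) \<Rightarrow> (nat \<Rightarrow> 'a::real_vector) \<Rightarrow> nat \<Rightarrow> 'a" where
  "seq_conv c b s = (\<Sum>k\<le>s. c (s - k) *\<^sub>R b k)"

lemma seq_conv_0: "seq_conv c b 0 = c 0 *\<^sub>R b 0"
  by (simp add: seq_conv_def)

lemma seq_conv_eq: "seq_conv c b s = (\<Sum>k<s. c (s - k) *\<^sub>R b k) + c 0 *\<^sub>R b s"
  unfolding seq_conv_def by (simp flip: lessThan_Suc_atMost)

lemma seq_conv_diff: "seq_conv c (\<lambda>k. x k - y k) s = seq_conv c x s - seq_conv c y s"
  unfolding seq_conv_def by (simp add: scaleR_diff_right sum_subtractf)

lemma norm_seq_conv_le: "norm (seq_conv c b s) \<le> (\<Sum>k\<le>s. norm (b k) * \<bar>c (s - k)\<bar>)"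
  unfolding seq_conv_def by (rule order_trans[OF norm_sum]) (simp add: mult.commute)

lemma summable_seq_conv_norm:
  fixes b :: "nat \<Rightarrow> 'a::real_normed_vector"
  assumes c: "summable (\<lambda>j. \<bar>c j\<bar>)" and b: "summable (\<lambda>k. norm (b k))"
  shows "summable (\<lambda>s. norm (seq_conv c b s))"
    and "(\<Sum>s. norm (seq_conv c b s)) \<le> (\<Sum>j. \<bar>c j\<bar>) * (\<Sum>k. norm (b k))"
proof -
  have sums: "(\<lambda>s. \<Sum>k\<le>s. norm (b k) * \<bar>c (s - k)\<bar>) sums ((\<Sum>k. norm (b k)) * (\<Sum>j. \<bar>c j\<bar>))"
    using Cauchy_product_sums[of "\<lambda>k. norm (b k)" "\<lambda>j. \<bar>c j\<bar>"] b c by simp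
  show summable: "summable (\<lambda>s. norm (seq_conv c b s))"
    by (rule summable_comparison_test'[OF sums_summable[OF sums]]) (simp add: norm_seq_conv_le)
  have "(\<Sum>s. norm (seq_conv c b s)) \<le> (\<Sum>s. \<Sum>k\<le>s. norm (b k) * \<bar>c (s - k)\<bar>)"
    by (intro suminf_le summable sums_summable[OF sums] norm_seq_conv_le)
  then show "(\<Sum>s. norm (seq_conv c b s)) \<le> (\<Sum>j. \<bar>c j\<bar>) * (\<Sum>k. norm (b k))"
    using sums_unique[OF sums] by (simp add: mult.commute)
qed

lemma suminf_norm_le_seq_conv:
  fixes b :: "nat \<Rightarrow> 'a::real_normed_vector"
  assumes c0: "c 0 = 1" and c: "summable (\<lambda>j. \<bar>c j\<bar>)" and b: "summable (\<lambda>k. norm (b k))"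
    and w: "summable w" "\<And>s. 0 \<le> w s" and bound: "\<And>s. b s \<noteq> 0 \<Longrightarrow> norm (seq_conv c b s) \<le> w s"
  shows "(\<Sum>s. norm (b s)) \<le> (\<Sum>s. w s) + ((\<Sum>j. \<bar>c j\<bar>) - 1) * (\<Sum>s. norm (b s))"
proof -
  define c' where "c' = c(0 := 0)"
  have "(\<lambda>j. \<bar>c j\<bar> - (if j = 0 then 1 else 0)) sums ((\<Sum>j. \<bar>c j\<bar>) - 1)"
    using c0 by (intro sums_diff summable_sums[OF c] sums_single[of 0 "\<lambda>_. 1::real", simplified])
  moreover have "(\<lambda>j. \<bar>c j\<bar> - (if j = 0 then 1 else 0)) = (\<lambda>j. \<bar>c' j\<bar>)"
    using c0 by (auto simp: c'_def)
  ultimately have c': "(\<lambda>j. \<bar>c' j\<bar>) sums ((\<Sum>j. \<bar>c j\<bar>) - 1)"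
    by simp
  define v where "v = (\<lambda>s. \<Sum>k\<le>s. norm (b k) * \<bar>c' (s - k)\<bar>)"
  have v: "v sums ((\<Sum>k. norm (b k)) * ((\<Sum>j. \<bar>c j\<bar>) - 1))"
    using Cauchy_product_sums[of "\<lambda>k. norm (b k)" "\<lambda>j. \<bar>c' j\<bar>"] b sums_summable[OF c']
    unfolding v_def sums_unique[OF c'] by simp
  have "norm (b s) \<le> w s + v s" for s
  proof (cases "b s = 0")
    case False
    have "norm (b s) \<le> norm (seq_conv c b s) + norm (\<Sum>k<s. c (s - k) *\<^sub>R b k)"
      using norm_triangle_ineq4[of "seq_conv c b s" "\<Sum>k<s. c (s - k) *\<^sub>R b k"] by (simp add: seq_conv_eq c0)
    also have "norm (\<Sum>k<s. c (s - k) *\<^sub>R b k) \<le> v s"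
    proof -
      have "norm (\<Sum>k<s. c (s - k) *\<^sub>R b k) \<le> (\<Sum>k<s. norm (b k) * \<bar>c' (s - k)\<bar>)"
        by (rule order_trans[OF norm_sum]) (simp add: c'_def mult.commute)
      also have "\<dots> = v s"
        by (simp add: v_def c'_def flip: lessThan_Suc_atMost)
      finally show ?thesis .
    qed
    finally show ?thesis
      using bound[OF False] by simp
  qed (simp add: w(2) v_def sum_nonneg)
  then have "(\<Sum>s. norm (b s)) \<le> (\<Sum>s. w s + v s)"
    by (intro suminf_le b summable_add w(1) sums_summable[OF v])
  also have "\<dots> = (\<Sum>s. w s) + (\<Sum>k. norm (b k)) * ((\<Sum>j. \<bar>c j\<bar>) - 1)"
    using suminf_add[OF w(1) sums_summable[OF v]] sums_unique[OF v] by simp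
  finally show ?thesis
    by (simp add: mult.commute)
qed

lemma seq_conv_prefix_solvable:
  fixes u :: "nat \<Rightarrow> 'a::real_vector"
  assumes "c 0 = 1"
  shows "\<exists>b. b 0 = \<beta> \<and> (\<forall>s\<in>{1..N}. seq_conv c b s = u s)"
proof (induction N)
  case 0
  then show ?case by auto
next
  case (Suc N)
  then obtain b where b: "b 0 = \<beta>" "\<forall>s\<in>{1..N}. seq_conv c b s = u s"
    by blast
  define b' where "b' = b(Suc N := u (Suc N) - (\<Sum>k<Suc N. c (Suc N - k) *\<^sub>R b k))"
  have "seq_conv c b' s = seq_conv c b s" if "s \<le> N" for s
    unfolding seq_conv_def b'_def using that by (intro sum.cong) auto
  moreover have "seq_conv c b' (Suc N) = u (Suc N)"
    unfolding seq_conv_eq b'_def using assms by simp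
  ultimately have "\<forall>s\<in>{1..Suc N}. seq_conv c b' s = u s"
    using b(2) by (auto simp: le_Suc_eq)
  moreover have "b' 0 = \<beta>"
    using b(1) by (simp add: b'_def)
  ultimately show ?case
    by blast
qed

lemma gauss_coeff_0: "gauss_coeff 0 = 1"
  by (simp add: gauss_coeff_def)

lemma abs_gauss_coeff_sums: "(\<lambda>j. \<bar>gauss_coeff j\<bar>) sums exp (1/2)"
proof -
  have "\<bar>gauss_coeff (2 * i)\<bar> = (1/2) ^ i /\<^sub>R fact i" for i
    by (simp add: gauss_coeff_def abs_divide power_abs field_simps)
  then have "(\<lambda>i. \<bar>gauss_coeff (2 * i)\<bar>) sums exp (1/2)"
    using exp_converges[of "1/2::real"] by simp
  moreover have "\<bar>gauss_coeff j\<bar> = 0" if "j \<notin> range (\<lambda>i. 2 * i)" for j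
    using that by (auto simp: gauss_coeff_def elim!: evenE)
  ultimately show ?thesis
    using sums_mono_reindex[of "\<lambda>i::nat. 2 * i" "\<lambda>j. \<bar>gauss_coeff j\<bar>"] by (simp add: strict_mono_def)
qed

lemma exp_half_less: "exp (1/2::real) < 5/3"
proof (rule ccontr)
  assume "\<not> exp (1/2::real) < 5/3"
  then have "5/3 * (5/3) \<le> exp (1/2::real) * exp (1/2)"
    by (intro mult_mono) auto
  also have "\<dots> = exp 1"
    by (simp flip: exp_add)
  finally show False
    using e_less_272 by simp
qed

lemma seq_conv_gauss_coeff_2: "seq_conv gauss_coeff b 2 = b 2 - b 0 / 2"
  for b :: "nat \<Rightarrow> complex"
  by (simp add: seq_conv_def numeral_2_eq_2 gauss_coeff_def scaleR_conv_of_real)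

lemma seq_conv_gauss_coeff_solvable:
  fixes X :: complex and U :: "nat \<Rightarrow> complex"
  shows "\<exists>b. 3/2 * b 0 + (if 2 \<le> N then b 2 else 0) = X \<and> (\<forall>s\<in>{1..N}. seq_conv gauss_coeff b s = U s)"
proof -
  define \<beta> where "\<beta> = (if 2 \<le> N then (X - U 2) / 2 else 2/3 * X)"
  obtain b where b: "b 0 = \<beta>" "\<forall>s\<in>{1..N}. seq_conv gauss_coeff b s = U s"
    using seq_conv_prefix_solvable[of gauss_coeff, OF gauss_coeff_0] by blast
  have "3/2 * b 0 + (if 2 \<le> N then b 2 else 0) = X"
  proof (cases "2 \<le> N")
    case True
    then have "seq_conv gauss_coeff b 2 = U 2"
      using b(2) by simp
    then have "b 2 = U 2 + \<beta> / 2"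
      using b(1) by (simp add: seq_conv_gauss_coeff_2 algebra_simps)
    then show ?thesis
      using True by (simp add: b(1) \<beta>_def field_simps)
  qed (simp add: b(1) \<beta>_def)
  with b(2) show ?thesis
    by blast
qed

text \<open>The summands of \<open>normS n (Stilde \<xi> n a)\<close>, written in terms of \<open>b = scaled_coeffs n a\<close>.\<close>
definition weighted_data :: "enat \<Rightarrow> (nat \<Rightarrow> complex) \<Rightarrow> nat \<Rightarrow> real" where
  "weighted_data n b s =
     (if enat s \<le> n then if s = 0 then cmod (3/2 * b 0 + b 2) else cmod (seq_conv gauss_coeff b s) else 0)"

lemma weighted_data_le:
  fixes b :: "nat \<Rightarrow> complex"
  shows "weighted_data n b s \<le> norm (seq_conv gauss_coeff b s) + (if s = 0 then norm (b 0) / 2 + norm (b 2) else 0)"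
proof -
  have "cmod (3/2 * b 0 + b 2) \<le> norm (b 0) + (norm (b 0) / 2 + norm (b 2))"
    using norm_triangle_ineq[of "3/2 * b 0" "b 2"] by (simp add: norm_mult)
  then show ?thesis
    by (simp add: weighted_data_def seq_conv_0 gauss_coeff_0)
qed

lemma weighted_data_upper_bound:
  fixes b :: "nat \<Rightarrow> complex"
  assumes b: "summable (\<lambda>s. norm (b s))"
  shows "summable (weighted_data n b)" and "(\<Sum>s. weighted_data n b s) \<le> 3 * (\<Sum>s. norm (b s))"
proof -
  have gc: "summable (\<lambda>j. \<bar>gauss_coeff j\<bar>)" "(\<Sum>j. \<bar>gauss_coeff j\<bar>) = exp (1/2)"
    using abs_gauss_coeff_sums by (simp_all add: sums_iff)
  note conv = summable_seq_conv_norm[OF gc(1) b, unfolded gc(2)]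
  define r where "r = (\<lambda>s. norm (seq_conv gauss_coeff b s) + (if s = 0 then norm (b 0) / 2 + norm (b 2) else 0))"
  have r: "r sums ((\<Sum>s. norm (seq_conv gauss_coeff b s)) + (norm (b 0) / 2 + norm (b 2)))"
    unfolding r_def by (intro sums_add summable_sums[OF conv(1)] sums_single[of 0 "\<lambda>_. norm (b 0) / 2 + norm (b 2)", simplified])
  have le: "weighted_data n b s \<le> r s" for s
    unfolding r_def by (rule weighted_data_le)
  have nonneg: "0 \<le> weighted_data n b s" for s
    by (simp add: weighted_data_def)
  show summable: "summable (weighted_data n b)"
    by (rule summable_comparison_test'[OF sums_summable[OF r], of 0]) (simp add: le nonneg)
  have "norm (b 0) + norm (b 2) \<le> (\<Sum>s. norm (b s))"
    using sum_le_suminf[OF b, of "{0, 2}"] by simp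
  moreover have "exp (1/2) * (\<Sum>s. norm (b s)) \<le> 2 * (\<Sum>s. norm (b s))"
    using exp_half_less by (intro mult_right_mono suminf_nonneg b) auto
  moreover have "(\<Sum>s. weighted_data n b s) \<le> (\<Sum>s. r s)"
    by (intro suminf_le le summable sums_summable[OF r])
  ultimately show "(\<Sum>s. weighted_data n b s) \<le> 3 * (\<Sum>s. norm (b s))"
    using sums_unique[OF r] conv(2) norm_ge_zero[of "b 0"] by linarith
qed

lemma norm_0_le_weighted_data:
  fixes b :: "nat \<Rightarrow> complex"
  assumes summable: "summable (weighted_data n b)" and supp: "\<And>s. \<not> enat s \<le> n \<Longrightarrow> b s = 0"
  shows "norm (b 0) \<le> (\<Sum>s. weighted_data n b s)"
proof -
  have nonneg: "0 \<le> weighted_data n b s" for s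
    by (simp add: weighted_data_def)
  have "norm (b 0) \<le> weighted_data n b 0 + weighted_data n b 2"
  proof (cases "enat 2 \<le> n")
    case True
    have "2 * b 0 = (3/2 * b 0 + b 2) - seq_conv gauss_coeff b 2"
      by (simp add: seq_conv_gauss_coeff_2)
    then have "2 * norm (b 0) \<le> cmod (3/2 * b 0 + b 2) + norm (seq_conv gauss_coeff b 2)"
      by (metis norm_mult norm_numeral norm_triangle_ineq4 of_real_numeral)
    then have "norm (b 0) \<le> cmod (3/2 * b 0 + b 2) + norm (seq_conv gauss_coeff b 2)"
      using norm_ge_zero[of "b 0"] by linarith
    then show ?thesis
      using True by (simp add: weighted_data_def zero_enat_def[symmetric])
  next
    case False
    then show ?thesis
      using supp[OF False] nonneg[of 2] by (simp add: weighted_data_def norm_mult zero_enat_def[symmetric])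
  qed
  also have "\<dots> \<le> (\<Sum>s. weighted_data n b s)"
    using sum_le_suminf[OF summable, of "{0, 2}"] nonneg by simp
  finally show ?thesis .
qed

lemma weighted_data_lower_bound:
  fixes b :: "nat \<Rightarrow> complex"
  assumes b: "summable (\<lambda>s. norm (b s))" and supp: "\<And>s. \<not> enat s \<le> n \<Longrightarrow> b s = 0"
  shows "(\<Sum>s. norm (b s)) \<le> 6 * (\<Sum>s. weighted_data n b s)"
proof -
  have gc: "summable (\<lambda>j. \<bar>gauss_coeff j\<bar>)" "(\<Sum>j. \<bar>gauss_coeff j\<bar>) = exp (1/2)"
    using abs_gauss_coeff_sums by (simp_all add: sums_iff)
  note summable = weighted_data_upper_bound(1)[OF b]
  define w where "w = (\<lambda>s. weighted_data n b s + (if s = 0 then norm (b 0) else 0))"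
  have w: "w sums ((\<Sum>s. weighted_data n b s) + norm (b 0))"
    unfolding w_def by (intro sums_add summable_sums[OF summable] sums_single[of 0 "\<lambda>_. norm (b 0)", simplified])
  have "norm (seq_conv gauss_coeff b s) \<le> w s" if "b s \<noteq> 0" for s
    using that supp[of s] by (cases "s = 0") (auto simp: w_def weighted_data_def seq_conv_0 gauss_coeff_0)
  then have "(\<Sum>s. norm (b s)) \<le> ((\<Sum>s. weighted_data n b s) + norm (b 0)) + (exp (1/2) - 1) * (\<Sum>s. norm (b s))"
    using suminf_norm_le_seq_conv[OF gauss_coeff_0 gc(1) b sums_summable[OF w]] sums_unique[OF w]
    by (simp add: w_def weighted_data_def gc(2))
  moreover have "exp (1/2) * (\<Sum>s. norm (b s)) \<le> 5/3 * (\<Sum>s. norm (b s))"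
    using exp_half_less by (intro mult_right_mono suminf_nonneg b) auto
  ultimately show ?thesis
    using norm_0_le_weighted_data[where n = n, OF summable supp] unfolding left_diff_distrib by linarith
qed

section \<open>The linearized scattering data at the energies \<open>E0\<close> and \<open>Es\<close>\<close>

lemma powr_neg_half: "0 \<le> x \<Longrightarrow> x powr - (1/2) = 1 / sqrt x"
  by (simp add: powr_minus_divide powr_half_sqrt)

lemma hermite_fun_eq:
  "hermite_fun j y = poly (hermite_poly 1 j) y * exp (- y\<^sup>2 / 2) / (sqrt (2 ^ j * fact j) * pi powr (1/4))"
proof -
  have "sqrt (sqrt pi) = pi powr (1/4)"
    by (simp add: powr_powr flip: powr_half_sqrt)
  then have "(2 ^ j * fact j * sqrt pi) powr (-1/2) = 1 / (sqrt (2 ^ j * fact j) * pi powr (1/4))"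
    by (simp add: powr_neg_half real_sqrt_mult)
  then show ?thesis
    unfolding hermite_fun_def by (simp add: poly_hermite_poly)
qed

lemma hermite_resc_eq:
  "hermite_resc k y = sqrt 2 * poly (hermite_poly (sqrt 2) k) y * exp (- y\<^sup>2) / sqrt (2 ^ k * fact k)"
  unfolding hermite_resc_def hermite_fun_eq by (simp add: poly_hermite_poly power_mult_distrib)

lemma normal_density_half: "normal_density 0 (1/2) y = sqrt 2 / sqrt pi * exp (- 2 * y\<^sup>2)"
  unfolding normal_density_def by (simp add: power_divide real_sqrt_divide field_simps)

lemma hermite_fun_hermite_fun_hermite_resc:
  "hermite_fun j y * hermite_fun i y * hermite_resc k y =
     normal_density 0 (1/2) y * poly (hermite_poly 1 j * hermite_poly 1 i * hermite_poly (sqrt 2) k) y /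
     (sqrt (2 ^ j * fact j) * sqrt (2 ^ i * fact i) * sqrt (2 ^ k * fact k))"
proof -
  define g where "g = exp (- y\<^sup>2 / 2)"
  define \<rho> where "\<rho> = pi powr (1/4)"
  have g: "exp (- y\<^sup>2) = g ^ 2" "exp (- 2 * y\<^sup>2) = g ^ 4"
    unfolding g_def by (simp_all flip: exp_of_nat_mult)
  have \<rho>: "sqrt pi = \<rho> ^ 2" "\<rho> > 0"
    unfolding \<rho>_def by (simp_all add: power2_eq_square powr_half_sqrt flip: powr_add)
  show ?thesis
    unfolding hermite_fun_eq hermite_resc_eq normal_density_half g \<rho>(1)
    unfolding g_def[symmetric] \<rho>_def[symmetric]
    using \<rho>(2) by (simp add: poly_mult field_simps eval_nat_numeral)
qed

definition mode_const :: "mode \<Rightarrow> real \<Rightarrow> real" where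
  "mode_const m E = (2 * real (fst m) + \<bar>E - mode_xi m E\<bar>\<^sup>2) powr (-1/2)"

lemma integral_mode_inner_hermite_resc:
  assumes "s \<noteq> 0"
  shows "(LBINT y. mode_inner (s, e) (0, -1) E y * hermite_resc k y) =
    mode_const (s, e) E * (E - mode_xi (s, e) E) *
    (gauss_expect (1/2) (hermite_poly 1 s * hermite_poly (sqrt 2) k) / (sqrt (2 ^ s * fact s) * sqrt (2 ^ k * fact k)))"
proof -
  let ?C = "mode_const (s, e) E * (E - mode_xi (s, e) E)"
  have "mode_inner (s, e) (0, -1) E y = ?C * (hermite_fun s y * hermite_fun 0 y)" for y
    using assms unfolding mode_inner_def mode_fun_def mode_const_def by (simp add: Let_def)
  then have "mode_inner (s, e) (0, -1) E y * hermite_resc k y = ?C * (hermite_fun s y * hermite_fun 0 y * hermite_resc k y)" for y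
    by (simp only: mult.assoc)
  then show ?thesis
    unfolding gauss_expect_def hermite_fun_hermite_fun_hermite_resc by simp
qed

lemma integral_mode_inner_pair_hermite_resc:
  assumes "(E - mode_xi (1, 1) E) * (E - mode_xi (1, -1) E) = 2"
  shows "(LBINT y. mode_inner (1, 1) (1, -1) E y * hermite_resc k y) =
    2 * (mode_const (1, 1) E * mode_const (1, -1) E) *
    (gauss_expect (1/2) ([:1, 0, 2:] * hermite_poly (sqrt 2) k) / sqrt (2 ^ k * fact k))"
proof -
  let ?C = "mode_const (1, 1) E * mode_const (1, -1) E"
  have "mode_inner (1, 1) (1, -1) E y * hermite_resc k y =
      2 * ?C * (normal_density 0 (1/2) y * poly ([:1, 0, 2:] * hermite_poly (sqrt 2) k) y / sqrt (2 ^ k * fact k))" for y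
  proof -
    have "mode_inner (1, 1) (1, -1) E y = ?C * (2 * (hermite_fun 0 y * hermite_fun 0 y) +
        (E - mode_xi (1, 1) E) * (E - mode_xi (1, -1) E) * (hermite_fun 1 y * hermite_fun 1 y))"
      unfolding mode_inner_def mode_fun_def mode_const_def by (simp add: Let_def algebra_simps)
    then have "mode_inner (1, 1) (1, -1) E y * hermite_resc k y =
        2 * ?C * (hermite_fun 0 y * hermite_fun 0 y * hermite_resc k y + hermite_fun 1 y * hermite_fun 1 y * hermite_resc k y)"
      unfolding assms by (simp add: algebra_simps)
    also have "\<dots> = 2 * ?C * (normal_density 0 (1/2) y * poly ([:1, 0, 2:] * hermite_poly (sqrt 2) k) y / sqrt (2 ^ k * fact k))"
      unfolding hermite_fun_hermite_fun_hermite_resc by (simp add: poly_mult field_simps)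
    finally show ?thesis .
  qed
  then show ?thesis
    unfolding gauss_expect_def by simp
qed

lemma Slin_eq_finite_sum:
  assumes "\<And>k. (LBINT y. mode_inner m p E y * hermite_resc k y) = c * Y k"
    and "\<And>k. M < k \<Longrightarrow> Y k = 0"
  shows "Slin n a m p E = \<i> * of_real (E / sqrt (E\<^sup>2 - 2 * real (fst p)) * c) *
           (\<Sum>k\<le>M. (if enat k \<le> n then a k else 0) * of_real (Y k))"
proof -
  have "(\<Sum>k. if enat k \<le> n then a k * of_real (LBINT y. mode_inner m p E y * hermite_resc k y) else 0) =
      (\<Sum>k. of_real c * ((if enat k \<le> n then a k else 0) * of_real (Y k)))"
    by (rule arg_cong[where f = suminf]) (auto simp: fun_eq_iff assms(1))
  also have "\<dots> = (\<Sum>k\<le>M. of_real c * ((if enat k \<le> n then a k else 0) * of_real (Y k)))"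
    by (rule suminf_finite) (auto simp: assms(2) not_le)
  finally show ?thesis
    unfolding Slin_def by (simp add: mult_ac flip: sum_distrib_left)
qed

definition scaled_coeffs :: "enat \<Rightarrow> (nat \<Rightarrow> complex) \<Rightarrow> nat \<Rightarrow> complex" where
  "scaled_coeffs n a k = (if enat k \<le> n then a k / of_real (sqrt (fact k)) else 0)"

lemma E0_pos: "0 < E0 \<xi>"
  unfolding E0_def by (simp add: add_nonneg_pos)

lemma E0_sq: "(E0 \<xi>)\<^sup>2 = \<xi>\<^sup>2 / 4 + 2"
  unfolding E0_def by (simp add: add_nonneg_pos)

lemma sqrt_E0_sq_minus_2:
  assumes "0 < \<xi>"
  shows "sqrt ((E0 \<xi>)\<^sup>2 - 2) = \<xi> / 2"
proof -
  have "(E0 \<xi>)\<^sup>2 - 2 = (\<xi> / 2)\<^sup>2"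
    by (simp add: E0_sq power_divide)
  then show ?thesis
    using assms by simp
qed

lemma mode_xi_E0:
  assumes "0 < \<xi>"
  shows "mode_xi (1, 1) (E0 \<xi>) = \<xi> / 2" and "mode_xi (1, -1) (E0 \<xi>) = - \<xi> / 2"
  unfolding mode_xi_def using sqrt_E0_sq_minus_2[OF assms] by simp_all

lemma mode_const_pair_E0:
  assumes "0 < \<xi>"
  shows "mode_const (1, 1) (E0 \<xi>) * mode_const (1, -1) (E0 \<xi>) = 1 / (2 * sqrt 2 * E0 \<xi>)"
proof -
  define E where "E = E0 \<xi>"
  have xi: "\<xi>\<^sup>2 = 4 * E\<^sup>2 - 8"
    unfolding E_def E0_sq by simp
  have "(2 + (E - \<xi> / 2)\<^sup>2) * (2 + (E + \<xi> / 2)\<^sup>2) = (2 + E\<^sup>2 + \<xi>\<^sup>2 / 4)\<^sup>2 - E\<^sup>2 * \<xi>\<^sup>2"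
    by (simp add: power2_eq_square field_simps)
  also have "\<dots> = (2 * sqrt 2 * E)\<^sup>2"
    unfolding xi by (simp add: power2_eq_square field_simps)
  finally have prod: "(2 + (E - \<xi> / 2)\<^sup>2) * (2 + (E + \<xi> / 2)\<^sup>2) = (2 * sqrt 2 * E)\<^sup>2" .
  have "mode_const (1, 1) E * mode_const (1, -1) E = (2 + (E - \<xi> / 2)\<^sup>2) powr (-1/2) * (2 + (E + \<xi> / 2)\<^sup>2) powr (-1/2)"
    unfolding mode_const_def E_def mode_xi_E0[OF assms] by simp
  also have "\<dots> = 1 / sqrt ((2 + (E - \<xi> / 2)\<^sup>2) * (2 + (E + \<xi> / 2)\<^sup>2))"
    by (simp add: powr_neg_half real_sqrt_mult)
  also have "\<dots> = 1 / (2 * sqrt 2 * E)"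
    unfolding prod using E0_pos[of \<xi>] by (simp add: E_def)
  finally show ?thesis
    unfolding E_def .
qed

lemma Stilde_0_eq:
  assumes "0 < \<xi>"
  shows "Stilde \<xi> n a 0 = \<i> * (3/2 * scaled_coeffs n a 0 + scaled_coeffs n a 2)"
proof -
  define E where "E = E0 \<xi>"
  have "(E - mode_xi (1, 1) E) * (E - mode_xi (1, -1) E) = 2"
    using E0_sq[of \<xi>] unfolding E_def mode_xi_E0[OF assms] by (simp add: power2_eq_square algebra_simps)
  then have Slin: "Slin n a (1, 1) (1, -1) E =
      \<i> * of_real (E / sqrt (E\<^sup>2 - 2 * real (fst (1::nat, -1::int))) * (2 * (mode_const (1, 1) E * mode_const (1, -1) E))) *
      (\<Sum>k\<le>2. (if enat k \<le> n then a k else 0) *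
         of_real (gauss_expect (1/2) ([:1, 0, 2:] * hermite_poly (sqrt 2) k) / sqrt (2 ^ k * fact k)))"
    by (intro Slin_eq_finite_sum integral_mode_inner_pair_hermite_resc)
       (simp_all add: gauss_expect_quadratic_mult_hermite del: mult_pCons_left)
  have pref: "sqrt 2 / 2 * \<xi> * (E / sqrt (E\<^sup>2 - 2 * real (fst (1::nat, -1::int))) * (2 * (mode_const (1, 1) E * mode_const (1, -1) E))) = 1"
    using E0_pos[of \<xi>] assms unfolding E_def mode_const_pair_E0[OF assms]
    by (simp add: sqrt_E0_sq_minus_2[OF assms] field_simps)
  have sum: "(\<Sum>k\<le>2. (if enat k \<le> n then a k else 0) *
      of_real (gauss_expect (1/2) ([:1, 0, 2:] * hermite_poly (sqrt 2) k) / sqrt (2 ^ k * fact k))) =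
      3/2 * scaled_coeffs n a 0 + scaled_coeffs n a 2"
  proof -
    have "sqrt (2 ^ 2 * fact 2) = 2 * sqrt (2::real)"
      using real_sqrt_mult[of 4 2] by (simp add: numeral_2_eq_2)
    then show ?thesis
      unfolding gauss_expect_quadratic_mult_hermite by (simp add: scaled_coeffs_def numeral_2_eq_2 field_simps)
  qed
  have "Stilde \<xi> n a 0 = of_real (sqrt 2 / 2 * \<xi>) * Slin n a (1, 1) (1, -1) E"
    unfolding Stilde_def E_def by simp
  also have "\<dots> = \<i> * of_real (sqrt 2 / 2 * \<xi> * (E / sqrt (E\<^sup>2 - 2 * real (fst (1::nat, -1::int))) *
      (2 * (mode_const (1, 1) E * mode_const (1, -1) E)))) *
      (\<Sum>k\<le>2. (if enat k \<le> n then a k else 0) *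
         of_real (gauss_expect (1/2) ([:1, 0, 2:] * hermite_poly (sqrt 2) k) / sqrt (2 ^ k * fact k)))"
    unfolding Slin by (simp only: of_real_mult mult_ac)
  finally show ?thesis
    unfolding pref sum by simp
qed

lemma Es_eq: "0 < \<xi> \<Longrightarrow> Es \<xi> s = \<xi> / 2 + real s / \<xi>"
proof -
  assume "0 < \<xi>"
  then have "\<xi>\<^sup>2 / 4 + real s + (real s)\<^sup>2 / \<xi>\<^sup>2 = (\<xi> / 2 + real s / \<xi>)\<^sup>2"
    by (simp add: power2_eq_square field_simps)
  then show ?thesis
    using \<open>0 < \<xi>\<close> unfolding Es_def by simp
qed

lemma mode_xi_Es:
  assumes "0 < \<xi>" "0 < s" "\<xi> \<noteq> sqrt (2 * real s)"
  shows "mode_xi (s, if real s < \<xi>\<^sup>2 / 2 then 1 else -1) (Es \<xi> s) = \<xi> / 2 - real s / \<xi>"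
proof -
  have "(Es \<xi> s)\<^sup>2 - 2 * real s = (\<xi> / 2 - real s / \<xi>)\<^sup>2"
    using assms(1) unfolding Es_eq[OF assms(1)] by (simp add: power2_eq_square field_simps)
  then have sq: "sqrt ((Es \<xi> s)\<^sup>2 - 2 * real s) = \<bar>\<xi> / 2 - real s / \<xi>\<bar>"
    by simp
  have "real s \<noteq> \<xi>\<^sup>2 / 2"
  proof
    assume "real s = \<xi>\<^sup>2 / 2"
    then have "2 * real s = \<xi>\<^sup>2"
      by simp
    then have "sqrt (2 * real s) = \<xi>"
      using assms(1) by simp
    with assms(3) show False
      by simp
  qed
  then have sign: "real s < \<xi>\<^sup>2 / 2 \<longleftrightarrow> 0 < \<xi> / 2 - real s / \<xi>" "\<xi> / 2 - real s / \<xi> \<noteq> 0"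
    using assms(1) by (auto simp: field_simps power2_eq_square)
  have "mode_xi (s, e) (Es \<xi> s) = of_int e * \<bar>\<xi> / 2 - real s / \<xi>\<bar>" for e
    using assms(2) by (simp add: mode_xi_def sq)
  then show ?thesis
    using sign by auto
qed

lemma mode_const_Es:
  assumes "0 < \<xi>" "0 < s" "mode_xi (s, e) (Es \<xi> s) = \<xi> / 2 - real s / \<xi>"
  shows "sqrt (1 + \<xi>\<^sup>2 / (2 * real s)) * (mode_const (s, e) (Es \<xi> s) * (Es \<xi> s - mode_xi (s, e) (Es \<xi> s))) = 1"
proof -
  define t where "t = 2 * real s / \<xi>"
  have t: "0 < t" "Es \<xi> s - mode_xi (s, e) (Es \<xi> s) = t"
    using assms(1,2) unfolding t_def assms(3) by (simp_all add: Es_eq[OF assms(1)] field_simps)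
  have "sqrt (1 + \<xi>\<^sup>2 / (2 * real s)) * t = sqrt ((1 + \<xi>\<^sup>2 / (2 * real s)) * t\<^sup>2)"
    using t(1) by (simp add: real_sqrt_mult)
  also have "(1 + \<xi>\<^sup>2 / (2 * real s)) * t\<^sup>2 = 2 * real s + t\<^sup>2"
    using assms(1,2) unfolding t_def by (simp add: field_simps power2_eq_square)
  moreover have "0 < 2 * real s + t\<^sup>2"
    using assms(2) by (simp add: add_pos_nonneg)
  ultimately show ?thesis
    unfolding mode_const_def t(2) by (simp add: powr_neg_half)
qed

lemma hermite_pairing_normalized:
  assumes "k \<le> s"
  shows "gauss_expect (1/2) (hermite_poly 1 s * hermite_poly (sqrt 2) k) / (sqrt (2 ^ s * fact s) * sqrt (2 ^ k * fact k)) =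
    sqrt (fact s) / 2 powr (real s / 2) * (gauss_coeff (s - k) / sqrt (fact k))"
proof -
  have "2 powr (real s / 2) = sqrt (2 ^ s)"
    by (simp add: powr_half_sqrt_powr powr_realpow)
  moreover have "fact s = sqrt (fact s) * (sqrt (fact s) :: real)"
    by simp
  ultimately show ?thesis
    using assms by (simp add: gauss_expect_hermite_mult_hermite real_sqrt_mult real_sqrt_power field_simps)
qed

lemma sum_hermite_pairing_eq_seq_conv:
  "(\<Sum>k\<le>s. (if enat k \<le> n then a k else 0) *
      of_real (gauss_expect (1/2) (hermite_poly 1 s * hermite_poly (sqrt 2) k) /
               (sqrt (2 ^ s * fact s) * sqrt (2 ^ k * fact k)))) =
    of_real (sqrt (fact s) / 2 powr (real s / 2)) * seq_conv gauss_coeff (scaled_coeffs n a) s"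
  unfolding seq_conv_def sum_distrib_left
proof (intro sum.cong refl)
  fix k
  assume "k \<in> {..s}"
  then have "gauss_expect (1/2) (hermite_poly 1 s * hermite_poly (sqrt 2) k) / (sqrt (2 ^ s * fact s) * sqrt (2 ^ k * fact k)) =
      sqrt (fact s) / 2 powr (real s / 2) * (gauss_coeff (s - k) / sqrt (fact k))"
    by (simp add: hermite_pairing_normalized)
  then show "(if enat k \<le> n then a k else 0) *
       of_real (gauss_expect (1/2) (hermite_poly 1 s * hermite_poly (sqrt 2) k) /
                (sqrt (2 ^ s * fact s) * sqrt (2 ^ k * fact k))) =
      of_real (sqrt (fact s) / 2 powr (real s / 2)) * (gauss_coeff (s - k) *\<^sub>R scaled_coeffs n a k)"
    by (simp add: scaled_coeffs_def scaleR_conv_of_real mult_ac)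
qed

lemma Stilde_pos_eq:
  assumes "0 < \<xi>" "0 < s" "\<xi> \<noteq> sqrt (2 * real s)"
  shows "Stilde \<xi> n a s =
    \<i> * of_real (sqrt (fact s) / 2 powr (real s / 2)) * seq_conv gauss_coeff (scaled_coeffs n a) s"
proof -
  define e :: int where "e = (if real s < \<xi>\<^sup>2 / 2 then 1 else -1)"
  define E where "E = Es \<xi> s"
  have xi: "mode_xi (s, e) E = \<xi> / 2 - real s / \<xi>"
    unfolding e_def E_def by (rule mode_xi_Es[OF assms])
  have Slin: "Slin n a (s, e) (0, -1) E =
      \<i> * of_real (E / sqrt (E\<^sup>2 - 2 * real (fst (0::nat, -1::int))) * (mode_const (s, e) E * (E - mode_xi (s, e) E))) *
      (\<Sum>k\<le>s. (if enat k \<le> n then a k else 0) *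
         of_real (gauss_expect (1/2) (hermite_poly 1 s * hermite_poly (sqrt 2) k) /
                  (sqrt (2 ^ s * fact s) * sqrt (2 ^ k * fact k))))"
    using assms(2) by (intro Slin_eq_finite_sum integral_mode_inner_hermite_resc) (simp_all add: gauss_expect_hermite_mult_hermite)
  have "0 < E"
    unfolding E_def Es_eq[OF assms(1)] using assms(1) by (simp add: add_pos_nonneg)
  then have pref: "sqrt (1 + \<xi>\<^sup>2 / (2 * real s)) *
      (E / sqrt (E\<^sup>2 - 2 * real (fst (0::nat, -1::int))) * (mode_const (s, e) E * (E - mode_xi (s, e) E))) = 1"
    using mode_const_Es[OF assms(1,2) xi[unfolded E_def]] unfolding E_def by simp
  have "Stilde \<xi> n a s = of_real (sqrt (1 + \<xi>\<^sup>2 / (2 * real s))) * Slin n a (s, e) (0, -1) E"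
    unfolding Stilde_def e_def E_def using assms(2) by simp
  also have "\<dots> = \<i> * of_real (sqrt (1 + \<xi>\<^sup>2 / (2 * real s)) *
      (E / sqrt (E\<^sup>2 - 2 * real (fst (0::nat, -1::int))) * (mode_const (s, e) E * (E - mode_xi (s, e) E)))) *
      (\<Sum>k\<le>s. (if enat k \<le> n then a k else 0) *
         of_real (gauss_expect (1/2) (hermite_poly 1 s * hermite_poly (sqrt 2) k) /
                  (sqrt (2 ^ s * fact s) * sqrt (2 ^ k * fact k))))"
    unfolding Slin by (simp only: of_real_mult mult_ac)
  finally show ?thesis
    unfolding pref sum_hermite_pairing_eq_seq_conv by simp
qed

section \<open>Norm bounds, injectivity and surjectivity\<close>

lemma Stilde_diff:
  assumes "0 < \<xi>" "\<forall>k::nat. 0 < k \<longrightarrow> \<xi> \<noteq> sqrt (2 * real k)"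
  shows "Stilde \<xi> n (\<lambda>k. a k - b k) s = Stilde \<xi> n a s - Stilde \<xi> n b s"
proof -
  have scaled: "scaled_coeffs n (\<lambda>k. a k - b k) = (\<lambda>k. scaled_coeffs n a k - scaled_coeffs n b k)"
    by (auto simp: fun_eq_iff scaled_coeffs_def diff_divide_distrib)
  show ?thesis
  proof (cases "s = 0")
    case True
    then show ?thesis
      by (simp add: Stilde_0_eq[OF assms(1)] scaled algebra_simps)
  next
    case False
    then have "0 < s" "\<xi> \<noteq> sqrt (2 * real s)"
      using assms(2) by simp_all
    then show ?thesis
      by (simp add: Stilde_pos_eq[OF assms(1)] scaled seq_conv_diff right_diff_distrib)
  qed
qed

lemma weighted_data_Stilde:
  assumes "0 < \<xi>" "\<forall>k::nat. 0 < k \<longrightarrow> \<xi> \<noteq> sqrt (2 * real k)"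
  shows "weighted_data n (scaled_coeffs n a) s =
    (if enat s \<le> n then 2 powr (real s / 2) * cmod (Stilde \<xi> n a s) / sqrt (fact s) else 0)"
proof (cases "s = 0")
  case True
  then show ?thesis
    by (simp add: weighted_data_def Stilde_0_eq[OF assms(1)] norm_mult)
next
  case False
  then have "0 < s" "\<xi> \<noteq> sqrt (2 * real s)"
    using assms(2) by simp_all
  then have "2 powr (real s / 2) * cmod (Stilde \<xi> n a s) / sqrt (fact s) = cmod (seq_conv gauss_coeff (scaled_coeffs n a) s)"
    by (simp add: Stilde_pos_eq[OF assms(1)] norm_mult norm_divide field_simps)
  then show ?thesis
    using False by (simp add: weighted_data_def)
qed

lemma normV_eq: "normV n a = (\<Sum>s. ennreal (cmod (scaled_coeffs n a s)))"
  unfolding normV_def scaled_coeffs_def by (intro arg_cong[where f = suminf]) (auto simp: fun_eq_iff norm_divide)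

lemma normS_Stilde_eq:
  assumes "0 < \<xi>" "\<forall>k::nat. 0 < k \<longrightarrow> \<xi> \<noteq> sqrt (2 * real k)"
  shows "normS n (Stilde \<xi> n a) = (\<Sum>s. ennreal (weighted_data n (scaled_coeffs n a) s))"
  unfolding normS_def weighted_data_Stilde[OF assms] by (intro arg_cong[where f = suminf]) (auto simp: fun_eq_iff)

lemma summable_scaled_coeffs: "normV n a < top \<Longrightarrow> summable (\<lambda>s. cmod (scaled_coeffs n a s))"
  unfolding normV_eq by (intro summable_suminf_not_top) auto

lemma Stilde_norm_bounds:
  assumes "0 < \<xi>" "\<forall>k::nat. 0 < k \<longrightarrow> \<xi> \<noteq> sqrt (2 * real k)" "normV n a < top"
  shows "ennreal (1/6) * normV n a \<le> normS n (Stilde \<xi> n a)"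
    and "normS n (Stilde \<xi> n a) \<le> ennreal 3 * normV n a"
proof -
  define b where "b = scaled_coeffs n a"
  have b: "summable (\<lambda>s. norm (b s))"
    unfolding b_def by (rule summable_scaled_coeffs[OF assms(3)])
  have supp: "\<And>s. \<not> enat s \<le> n \<Longrightarrow> b s = 0"
    by (simp add: b_def scaled_coeffs_def)
  have T: "0 \<le> (\<Sum>s. norm (b s))"
    by (intro suminf_nonneg b) simp
  have V: "normV n a = ennreal (\<Sum>s. norm (b s))"
    unfolding normV_eq b_def[symmetric] by (intro suminf_ennreal2 b) simp
  have S: "normS n (Stilde \<xi> n a) = ennreal (\<Sum>s. weighted_data n b s)"
    unfolding normS_Stilde_eq[OF assms(1,2)] b_def[symmetric]
    by (intro suminf_ennreal2 weighted_data_upper_bound(1)[OF b]) (simp add: weighted_data_def)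
  have "ennreal (1/6) * normV n a = ennreal ((\<Sum>s. norm (b s)) / 6)"
    unfolding V using T by (simp flip: ennreal_mult)
  also have "\<dots> \<le> normS n (Stilde \<xi> n a)"
    unfolding S using weighted_data_lower_bound[where n = n, OF b supp] by (intro ennreal_leI) simp
  finally show "ennreal (1/6) * normV n a \<le> normS n (Stilde \<xi> n a)" .
  have "normS n (Stilde \<xi> n a) \<le> ennreal (3 * (\<Sum>s. norm (b s)))"
    unfolding S using weighted_data_upper_bound(2)[OF b] by (intro ennreal_leI)
  also have "\<dots> = ennreal 3 * normV n a"
    unfolding V using T by (simp add: ennreal_mult)
  finally show "normS n (Stilde \<xi> n a) \<le> ennreal 3 * normV n a" .
qed

lemma Stilde_injective:
  assumes "0 < \<xi>" "\<forall>k::nat. 0 < k \<longrightarrow> \<xi> \<noteq> sqrt (2 * real k)"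
    and "normV n a < top" "normV n b < top" and "\<forall>s. enat s \<le> n \<longrightarrow> Stilde \<xi> n a s = Stilde \<xi> n b s"
    and "enat k \<le> n"
  shows "a k = b k"
proof -
  define d where "d = scaled_coeffs n (\<lambda>k. a k - b k)"
  have "norm (d s) \<le> norm (scaled_coeffs n a s) + norm (scaled_coeffs n b s)" for s
    unfolding d_def scaled_coeffs_def by (simp add: diff_divide_distrib norm_triangle_ineq4)
  then have d: "summable (\<lambda>s. norm (d s))"
    by (intro summable_comparison_test'[OF summable_add[OF summable_scaled_coeffs[OF assms(3)] summable_scaled_coeffs[OF assms(4)]], of 0]) simp
  have "weighted_data n d s = 0" for s
    unfolding d_def weighted_data_Stilde[OF assms(1,2)] Stilde_diff[OF assms(1,2)] using assms(5) by simp
  moreover have supp: "\<And>s. \<not> enat s \<le> n \<Longrightarrow> d s = 0"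
    by (simp add: d_def scaled_coeffs_def)
  ultimately have "(\<Sum>s. norm (d s)) \<le> 0"
    using weighted_data_lower_bound[where n = n, OF d supp] by simp
  moreover have "norm (d k) \<le> (\<Sum>s. norm (d s))"
    using sum_le_suminf[OF d, of "{k}"] by simp
  ultimately have "norm (d k) \<le> 0"
    by linarith
  then show ?thesis
    using assms(6) by (simp add: d_def scaled_coeffs_def)
qed

lemma Stilde_surjective:
  assumes "0 < \<xi>" "\<forall>k::nat. 0 < k \<longrightarrow> \<xi> \<noteq> sqrt (2 * real k)" "n = enat N"
  shows "\<exists>a. \<forall>s. enat s \<le> n \<longrightarrow> Stilde \<xi> n a s = t s"
proof -
  define w where "w s = sqrt (fact s) / 2 powr (real s / 2)" for s
  obtain b where b: "3/2 * b 0 + (if 2 \<le> N then b 2 else 0) = t 0 / \<i>"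
    "\<forall>s\<in>{1..N}. seq_conv gauss_coeff b s = t s / (\<i> * of_real (w s))"
    using seq_conv_gauss_coeff_solvable[where N = N and X = "t 0 / \<i>" and U = "\<lambda>s. t s / (\<i> * of_real (w s))"]
    by blast
  define a where "a k = b k * of_real (sqrt (fact k))" for k
  have scaled: "scaled_coeffs n a k = (if k \<le> N then b k else 0)" for k
    by (simp add: scaled_coeffs_def a_def assms(3))
  have "Stilde \<xi> n a s = t s" if "s \<le> N" for s
  proof (cases "s = 0")
    case True
    then show ?thesis
      using b(1) by (simp add: Stilde_0_eq[OF assms(1)] scaled)
  next
    case False
    then have "0 < s" "\<xi> \<noteq> sqrt (2 * real s)"
      using assms(2) by simp_all
    moreover have "seq_conv gauss_coeff (scaled_coeffs n a) s = t s / (\<i> * of_real (w s))"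
      using b(2) that False unfolding seq_conv_def scaled by (auto intro!: sum.cong)
    moreover have "w s \<noteq> 0"
      by (simp add: w_def)
    ultimately show ?thesis
      by (simp add: Stilde_pos_eq[OF assms(1)] w_def)
  qed
  then show ?thesis
    using assms(3) by auto
qed

theorem mainTheorem2:
  shows "(\<forall>(n::enat) (\<xi>::real). 1 \<le> n \<longrightarrow> 0 < \<xi> \<longrightarrow> (\<forall>k::nat. 0 < k \<longrightarrow> \<xi> \<noteq> sqrt (2 * real k)) \<longrightarrow>
            (\<forall>a b. normV n a < top \<longrightarrow> normV n b < top \<longrightarrow>
               (\<forall>s. enat s \<le> n \<longrightarrow> Stilde \<xi> n a s = Stilde \<xi> n b s) \<longrightarrow>
               (\<forall>k. enat k \<le> n \<longrightarrow> a k = b k))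
          \<and> (n \<noteq> \<infinity> \<longrightarrow> (\<forall>t. \<exists>a. \<forall>s. enat s \<le> n \<longrightarrow> Stilde \<xi> n a s = t s)))
   \<and> (\<exists>C1 C2::real. 0 < C1 \<and> 0 < C2 \<and>
        (\<forall>(n::enat) (\<xi>::real) a. 1 \<le> n \<longrightarrow> 0 < \<xi> \<longrightarrow> (\<forall>k::nat. 0 < k \<longrightarrow> \<xi> \<noteq> sqrt (2 * real k)) \<longrightarrow>
           normV n a < top \<longrightarrow>
           ennreal C1 * normV n a \<le> normS n (Stilde \<xi> n a) \<and>
           normS n (Stilde \<xi> n a) \<le> ennreal C2 * normV n a))"
proof (intro conjI allI impI)
  fix n :: enat and \<xi> :: real and a b :: "nat \<Rightarrow> complex" and k :: nat
  assume "0 < \<xi>" "\<forall>k::nat. 0 < k \<longrightarrow> \<xi> \<noteq> sqrt (2 * real k)"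
    and "normV n a < top" "normV n b < top" "\<forall>s. enat s \<le> n \<longrightarrow> Stilde \<xi> n a s = Stilde \<xi> n b s"
    and "enat k \<le> n"
  then show "a k = b k"
    by (rule Stilde_injective)
next
  fix n :: enat and \<xi> :: real and t :: "nat \<Rightarrow> complex"
  assume "0 < \<xi>" "\<forall>k::nat. 0 < k \<longrightarrow> \<xi> \<noteq> sqrt (2 * real k)" "n \<noteq> \<infinity>"
  then show "\<exists>a. \<forall>s. enat s \<le> n \<longrightarrow> Stilde \<xi> n a s = t s"
    using Stilde_surjective by (cases n) auto
next
  show "\<exists>C1 C2::real. 0 < C1 \<and> 0 < C2 \<and>
        (\<forall>(n::enat) (\<xi>::real) a. 1 \<le> n \<longrightarrow> 0 < \<xi> \<longrightarrow> (\<forall>k::nat. 0 < k \<longrightarrow> \<xi> \<noteq> sqrt (2 * real k)) \<longrightarrow>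
           normV n a < top \<longrightarrow>
           ennreal C1 * normV n a \<le> normS n (Stilde \<xi> n a) \<and>
           normS n (Stilde \<xi> n a) \<le> ennreal C2 * normV n a)"
    using Stilde_norm_bounds by (intro exI[of _ "1/6"] exI[of _ 3]) simp
qed

end
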